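(* Consider the setting below with $P_0=0$, $E_{\mathrm{sleep}}\equiv 0$, $\gamma>0$, $\alpha\in(0,1]$, target rate $R>0$, and with no maximal power constraint (i.e. $P_{\mathrm{max}}=+\infty$, so $p_n\in[0,\infty)$). Define $$R_{\mathrm{a}}=\frac{W_0\!\left(-\alpha^{-1}e^{-\alpha^{-1}}\right)+\alpha^{-1}}{\log 2},$$ where $W_0$ is the principal branch of the Lambert $W$ function (so $R_{\mathrm{a}}=0$ when $\alpha=1$, in which case $NR/R_{\mathrm{a}}$ is interpreted as $+\infty$). Then a minimum of Problem (P) is achieved by activating $$N_{\mathrm{a}}=\lceil\!\lfloor \min(NR/R_{\mathrm{a}},N)\rceil\!\rfloor$$ time slots with uniform power $$p_n=\left(2^{RN/N_{\mathrm{a}}}-1\right)\sigma^2 \ \text{ for } n=0,\dots,N_{\mathrm{a}}-1,\qquad p_n=0 \text{ otherwise}.$$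
   Context: Setting: fix an integer $N\ge1$ (number of symbols in a frame), a symbol duration $T>0$, a normalized noise power $\sigma^2>0$, a maximal per-slot transmit power $P_{\mathrm{max}}\in(0,+\infty]$, constants $\alpha\in(0,1]$, $\gamma\ge0$, $P_0\ge0$, and a sleep power function $P_{\mathrm{sleep}}:[0,\infty)\to[0,\infty)$ with sleep energy $E_{\mathrm{sleep}}(t)=\int_0^tP_{\mathrm{sleep}}(t')dt'$. An allocation is an integer $N_{\mathrm{a}}\in\{0,\dots,N\}$ together with powers $p_0,\dots,p_{N_{\mathrm{a}}-1}\in[0,P_{\mathrm{max}}]$ (and $p_n=0$ for $n\ge N_{\mathrm{a}}$). Its average consumed power is $$P_{\mathrm{cons}}=\frac{N_{\mathrm{a}}}{N}P_0+\frac{\gamma}{N}\sum_{n=0}^{N_{\mathrm{a}}-1}p_n^{\alpha}+\frac{E_{\mathrm{sleep}}((N-N_{\mathrm{a}})T)}{NT}.$$ Problem (P): given a target rate $R>0$, minimize $P_{\mathrm{cons}}$ over all allocations subject to $\frac1N\sum_{n=0}^{N_{\mathrm{a}}-1}\log_2(1+p_n/\sigma^2)=R$. Notation: for real $y\ge0$, $\lceil\!\lfloor y\rceil\!\rfloor$ (ceil-floor operator) denotes whichever of $\lfloor y\rfloor$, $\lceil y\rceil$ gives the smaller value of the objective of the problem under consideration (with the corresponding uniform allocation). *)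

theory Defs
  imports Complex_Main
begin

definition lambertW0 :: "real \<Rightarrow> real" where
  "lambertW0 x = (THE w. w \<ge> -1 \<and> w * exp w = x)"

definition pcons :: "nat \<Rightarrow> real \<Rightarrow> real \<Rightarrow> real \<Rightarrow> real \<Rightarrow> (real \<Rightarrow> real)
                      \<Rightarrow> nat \<Rightarrow> (nat \<Rightarrow> real) \<Rightarrow> real" where
  "pcons N T P0 \<gamma> \<alpha> Esleep Na p =
     real Na / real N * P0 + \<gamma> / real N * (\<Sum>n<Na. p n powr \<alpha>)
     + Esleep (real (N - Na) * T) / (real N * T)"

text \<open>Admissible allocation for Problem (P) with maximal power Pmax = +infinity.\<close>
definition feasible :: "nat \<Rightarrow> real \<Rightarrow> real \<Rightarrow> nat \<Rightarrow> (nat \<Rightarrow> real) \<Rightarrow> bool" where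
  "feasible N \<sigma>2 R Na p \<longleftrightarrow> Na \<le> N \<and> (\<forall>n<Na. 0 \<le> p n) \<and>
     (1 / real N) * (\<Sum>n<Na. log 2 (1 + p n / \<sigma>2)) = R"

definition unif_alloc :: "nat \<Rightarrow> real \<Rightarrow> real \<Rightarrow> nat \<Rightarrow> nat \<Rightarrow> real" where
  "unif_alloc N \<sigma>2 R k n = (if n < k then (2 powr (R * real N / real k) - 1) * \<sigma>2 else 0)"

text \<open>Ceil-floor operator: of floor y and ceiling y, the one whose uniform allocation has
  the smaller objective value cost; floor y is only eligible when it is >= 1 (0 active slots
  cannot achieve a positive rate).\<close>
definition ceilfloor :: "(nat \<Rightarrow> real) \<Rightarrow> real \<Rightarrow> nat" where
  "ceilfloor cost y =
     (if 1 \<le> nat \<lfloor>y\<rfloor> \<and> cost (nat \<lfloor>y\<rfloor>) \<le> cost (nat \<lceil>y\<rceil>) then nat \<lfloor>y\<rfloor> else nat \<lceil>y\<rceil>)"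

end

theory Submission
  imports Defs
begin

text \<open>Let \<open>x\<^sub>n = log\<^sub>2 (1 + p\<^sub>n / \<sigma>\<^sup>2)\<close> be the rate carried by slot \<open>n\<close>. The objective is
  \<open>\<gamma> (\<sigma>\<^sup>2)\<^sup>\<alpha> / N \<cdot> \<Sum>\<^sub>n f(x\<^sub>n)\<close> with \<open>f(x) = (2\<^sup>x - 1)\<^sup>\<alpha>\<close>, subject to \<open>\<Sum>\<^sub>n x\<^sub>n = N R\<close>.
  Although \<open>f\<close> is not convex for \<open>\<alpha> < 1\<close>, two rates \<open>t < s\<close> with \<open>f'(t) = f'(s)\<close> satisfy
  \<open>f''(t) + f''(s)/j < 0\<close>. Hence \<open>f(t) + j f((S - t)/j)\<close> is minimised at \<open>t = 0\<close> or \<open>t = S/(j+1)\<close>,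
  and splitting off the smallest rate inductively shows that some uniform allocation over
  \<open>j \<le> N\<^sub>a\<close> slots is at least as good as any feasible allocation.
  The uniform cost \<open>j f(S/j)\<close> is \<open>S\<close> times the energy per bit \<open>f(x)/x\<close> at \<open>x = S/j\<close>, which
  decreases up to \<open>R\<^sub>a\<close> and increases beyond it, \<open>R\<^sub>a ln 2\<close> being the root \<open>\<tau> \<ge> (1 - \<alpha>)/\<alpha>\<close> of
  \<open>e\<^sup>\<tau> (\<alpha> \<tau> - 1) + 1\<close> that \<open>W\<^sub>0\<close> expresses in closed form. So \<open>j \<mapsto> j f(S/j)\<close> is unimodal
  on \<open>1..N\<close> with real minimiser \<open>min (S/R\<^sub>a) N\<close>, and the better of its floor and ceiling is optimal.\<close>

section \<open>Splitting a total rate over several slots\<close>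

lemma min_endpoints_le_if_concave_at_critical_points:
  fixes f f' f'' :: "real \<Rightarrow> real"
  assumes cont: "continuous_on {l..u} f"
    and f': "\<And>t. l < t \<Longrightarrow> t < u \<Longrightarrow> (f has_real_derivative f' t) (at t)"
    and f'': "\<And>t. l < t \<Longrightarrow> t < u \<Longrightarrow> (f' has_real_derivative f'' t) (at t)"
    and crit: "\<And>t. l < t \<Longrightarrow> t < u \<Longrightarrow> f' t = 0 \<Longrightarrow> f'' t < 0"
    and t: "l \<le> t" "t \<le> u"
  shows "min (f l) (f u) \<le> f t"
proof -
  obtain t0 where t0: "l \<le> t0" "t0 \<le> u" and min: "\<And>s. l \<le> s \<Longrightarrow> s \<le> u \<Longrightarrow> f t0 \<le> f s"
    using continuous_attains_inf[OF compact_Icc _ cont] t by fastforce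
  have "t0 = l \<or> t0 = u"
  proof (rule ccontr)
    assume "\<not> (t0 = l \<or> t0 = u)"
    then have int: "l < t0" "t0 < u" using t0 by auto
    have "f' t0 = 0"
      by (rule DERIV_local_min[OF f'[OF int], of "min (t0 - l) (u - t0)"])
        (use int in \<open>auto intro!: min simp: abs_if split: if_splits\<close>)
    then obtain d where d: "0 < d" "\<And>h. 0 < h \<Longrightarrow> h < d \<Longrightarrow> f' (t0 + h) < 0"
      using DERIV_neg_dec_right[OF f''[OF int] crit[OF int]] by auto
    define e where "e = min d (u - t0) / 2"
    have e: "0 < e" "e < d" "t0 + e < u"
      unfolding e_def using d(1) int by (auto simp: min_def field_simps)
    obtain z where z: "t0 < z" "z < t0 + e" "f (t0 + e) - f t0 = e * f' z"
      using MVT2[of t0 "t0 + e" f f'] e int f' by force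
    have "f' z < 0" using d(2)[of "z - t0"] z e by simp
    with e(1) have "e * f' z < 0" by (rule mult_pos_neg)
    then have "f (t0 + e) < f t0" using z(3) by linarith
    with min[of "t0 + e"] e int show False by simp
  qed
  then show ?thesis using min[OF t] by auto
qed

text \<open>\<open>power_cost a x\<close> is \<open>(p / \<sigma>\<^sup>2) powr a\<close> for the power \<open>p\<close> that carries rate \<open>x\<close> on one slot.\<close>

definition power_cost :: "real \<Rightarrow> real \<Rightarrow> real" where
  "power_cost a x = (2 powr x - 1) powr a"

definition power_cost' :: "real \<Rightarrow> real \<Rightarrow> real" where
  "power_cost' a x = a * ln 2 * 2 powr x * (2 powr x - 1) powr (a - 1)"

definition power_cost'' :: "real \<Rightarrow> real \<Rightarrow> real" where
  "power_cost'' a x = a * (ln 2)\<^sup>2 * 2 powr x * (2 powr x - 1) powr (a - 2) * (a * 2 powr x - 1)"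

lemma one_less_two_powr: "0 < x \<Longrightarrow> 1 < (2::real) powr x"
  by (simp add: powr_less_cancel_iff[of 2 0 x, simplified])

lemma power_cost_zero: "0 < a \<Longrightarrow> power_cost a 0 = 0"
  unfolding power_cost_def by simp

lemma continuous_on_power_cost: "0 < a \<Longrightarrow> continuous_on {0..} (power_cost a)"
  unfolding power_cost_def
  by (rule continuous_on_powr') (auto intro!: continuous_intros simp: ge_one_powr_ge_zero)

lemma has_real_derivative_power_cost:
  "0 < x \<Longrightarrow> (power_cost a has_real_derivative power_cost' a x) (at x)"
  using one_less_two_powr[of x] unfolding power_cost_def power_cost'_def
  by (auto intro!: derivative_eq_intros)

lemma has_real_derivative_power_cost':
  assumes "0 < x"
  shows "(power_cost' a has_real_derivative power_cost'' a x) (at x)"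
proof -
  define w where "w = 2 powr x - 1"
  have w: "0 < w" "2 powr x = w + 1"
    using one_less_two_powr[OF assms] w_def by auto
  have "(power_cost' a has_real_derivative
      a * ln 2 * (2 powr x * ln 2 * w powr (a - 1)
        + 2 powr x * ((a - 1) * w powr (a - 2) * (2 powr x * ln 2)))) (at x)"
    unfolding power_cost'_def w_def using one_less_two_powr[OF assms]
    by (auto intro!: derivative_eq_intros simp: algebra_simps)
  moreover have "w powr (a - 1) = w powr (a - 2) * w"
    using w powr_add[of w "a - 2" 1] by simp
  ultimately show ?thesis
    unfolding power_cost''_def w_def[symmetric] w(2) by (simp add: algebra_simps power2_eq_square)
qed

lemma power_cost'_pos: "0 < x \<Longrightarrow> 0 < a \<Longrightarrow> 0 < power_cost' a x"
  using one_less_two_powr[of x] unfolding power_cost'_def by simp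

lemma power_cost''_eq:
  assumes "0 < x"
  shows "power_cost'' a x = power_cost' a x * ln 2 * (a - (1 - a) / (2 powr x - 1))"
proof -
  define w where "w = 2 powr x - 1"
  have w: "0 < w" "2 powr x = w + 1"
    using one_less_two_powr[OF assms] w_def by auto
  have "w powr (a - 1) = w powr (a - 2) * w"
    using w powr_add[of w "a - 2" 1] by simp
  then show ?thesis
    unfolding power_cost''_def power_cost'_def w_def[symmetric] w(2) using w(1)
    by (simp add: field_simps power2_eq_square)
qed

text \<open>\<open>F w2\<close> is the claimed difference times \<open>ln w2 - ln w1\<close>; \<open>F\<close> and \<open>F'\<close> vanish at \<open>w1\<close>, and
  \<open>F'' > 0\<close> beyond \<open>w1\<close>.\<close>

lemma ln_ratio_bound:
  fixes w1 w2 b :: real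
  assumes w1: "0 < w1" and w12: "w1 < w2"
    and level: "ln (1 + w2) - ln (1 + w1) = b * (ln w2 - ln w1)"
  shows "2 * w1 * w2 * (1 - b) < b * (w1 + w2)"
proof -
  define F where
    "F v = (ln (1 + v) - ln (1 + w1)) * (w1 + v + 2 * w1 * v) - 2 * w1 * v * (ln v - ln w1)" for v
  define F' where "F' v = (w1 + v + 2 * w1 * v) / (1 + v) + (ln (1 + v) - ln (1 + w1)) * (1 + 2 * w1)
      - 2 * w1 * (ln v - ln w1) - 2 * w1" for v
  define F'' where "F'' v = (1 + w1) / (1 + v)\<^sup>2 + (1 + 2 * w1) / (1 + v) - 2 * w1 / v" for v
  have dF: "(F has_real_derivative F' v) (at v)" if "0 < v" for v
    unfolding F_def F'_def using that w1 by (auto intro!: derivative_eq_intros)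
  have dF': "(F' has_real_derivative F'' v) (at v)" if "0 < v" for v
    unfolding F'_def F''_def using that w1
    by (auto intro!: derivative_eq_intros)
      (simp add: divide_simps; simp add: algebra_simps power2_eq_square)
  have F''_pos: "0 < F'' v" if "w1 < v" for v
  proof -
    have "F'' v = (v - w1) * (v + 2) / (v * (1 + v)\<^sup>2)"
      unfolding F''_def using that w1
      by (simp add: divide_simps) (simp add: algebra_simps power2_eq_square)
    then show ?thesis using that w1 by simp
  qed
  have F'_pos: "0 < F' v" if v: "w1 < v" for v
  proof -
    obtain z where "w1 < z" "z < v" "F' v - F' w1 = (v - w1) * F'' z"
      using MVT2[OF v, of F' F''] dF' w1 by force
    moreover have "F' w1 = 0" unfolding F'_def using w1 by (simp add: field_simps)
    ultimately show ?thesis using F''_pos[of z] v by simp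
  qed
  obtain z where "w1 < z" "z < w2" "F w2 - F w1 = (w2 - w1) * F' z"
    using MVT2[OF w12, of F F'] dF w1 by force
  then have "0 < F w2" using F'_pos[of z] w12 unfolding F_def by simp
  moreover have "F w2 = (ln w2 - ln w1) * (b * (w1 + w2 + 2 * w1 * w2) - 2 * w1 * w2)"
    unfolding F_def level by (simp add: algebra_simps)
  moreover have "0 < ln w2 - ln w1" using w1 w12 by simp
  ultimately have "0 < b * (w1 + w2 + 2 * w1 * w2) - 2 * w1 * w2"
    by (simp add: zero_less_mult_iff)
  then show ?thesis by (simp add: algebra_simps)
qed

lemma power_cost''_sum_neg_if_equal_slopes:
  assumes a: "0 < a" "a \<le> 1" and j: "1 \<le> j" and xy: "0 < x" "x < y"
    and slopes: "power_cost' a x = power_cost' a y"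
  shows "power_cost'' a x + power_cost'' a y / j < 0"
proof -
  define w1 where "w1 = 2 powr x - 1"
  define w2 where "w2 = 2 powr y - 1"
  have w1: "0 < w1" using one_less_two_powr[OF xy(1)] w1_def by simp
  have w12: "w1 < w2" unfolding w1_def w2_def using xy by simp
  define X where "X w = a - (1 - a) / w" for w
  have "a * ln 2 * ((w1 + 1) * w1 powr (a - 1)) = a * ln 2 * ((w2 + 1) * w2 powr (a - 1))"
    using slopes unfolding power_cost'_def w1_def w2_def by (simp add: algebra_simps)
  then have "(w1 + 1) * w1 powr (a - 1) = (w2 + 1) * w2 powr (a - 1)"
    using a by simp
  then have "ln ((w1 + 1) * w1 powr (a - 1)) = ln ((w2 + 1) * w2 powr (a - 1))"
    by simp
  moreover have ln_eq: "ln ((w + 1) * w powr (a - 1)) = ln (w + 1) + (a - 1) * ln w"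
    if "0 < w" for w
    using that ln_mult[of "w + 1" "w powr (a - 1)"] ln_powr[of w "a - 1"] by simp
  ultimately have "ln (w1 + 1) + (a - 1) * ln w1 = ln (w2 + 1) + (a - 1) * ln w2"
    using ln_eq[OF w1] ln_eq[OF order.strict_trans[OF w1 w12]] by linarith
  then have "ln (1 + w2) - ln (1 + w1) = (1 - a) * (ln w2 - ln w1)"
    by (simp add: algebra_simps)
  from ln_ratio_bound[OF w1 w12 this]
  have sum_neg: "X w1 + X w2 < 0"
    unfolding X_def using w1 w12 by (simp add: field_simps)
  have "X w1 \<le> X w2"
    unfolding X_def using w1 w12 a by (simp add: divide_left_mono)
  then have "X w1 + X w2 / j < 0"
  proof (cases "0 \<le> X w2")
    case True
    then have "X w2 / j \<le> X w2" using j by (simp add: divide_le_eq mult_le_cancel_left1)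
    then show ?thesis using sum_neg by simp
  next
    case False
    then have "X w2 / j < 0" using j by (simp add: divide_neg_pos)
    then show ?thesis using \<open>X w1 \<le> X w2\<close> False by linarith
  qed
  moreover have "0 < power_cost' a x * ln 2" using power_cost'_pos[OF xy(1) a(1)] by simp
  moreover have
    "power_cost'' a x + power_cost'' a y / j = power_cost' a x * ln 2 * (X w1 + X w2 / j)"
    unfolding power_cost''_eq[OF xy(1)] power_cost''_eq[OF order.strict_trans[OF xy]] slopes
      X_def w1_def w2_def by (simp add: algebra_simps)
  ultimately show ?thesis by (metis mult_pos_neg)
qed

text \<open>An interior minimum of \<open>\<phi>\<close> would be a point of equal slopes, where \<open>\<phi>'' < 0\<close>.\<close>

lemma power_cost_split_ge_min:
  assumes a: "0 < a" "a \<le> 1" and j: "1 \<le> j" and t: "0 \<le> t" "t \<le> S / (j + 1)"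
  shows "min (j * power_cost a (S / j)) ((j + 1) * power_cost a (S / (j + 1)))
           \<le> power_cost a t + j * power_cost a ((S - t) / j)"
proof -
  define c where "c = S / (j + 1)"
  define \<phi> where "\<phi> t = power_cost a t + j * power_cost a ((S - t) / j)" for t
  define \<phi>' where "\<phi>' t = power_cost' a t - power_cost' a ((S - t) / j)" for t
  define \<phi>'' where "\<phi>'' t = power_cost'' a t + power_cost'' a ((S - t) / j) / j" for t
  have "S = (j + 1) * c" unfolding c_def using j by simp
  moreover have "0 \<le> c" using t unfolding c_def by linarith
  ultimately have c: "0 \<le> c" "c \<le> S" "(S - c) / j = c"
    using j by (simp_all add: algebra_simps nonzero_divide_eq_eq)
  have inner: "\<And>t. 0 < t \<Longrightarrow> t < c \<Longrightarrow> t < (S - t) / j"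
    using j unfolding c_def by (simp add: field_simps)
  have inner_deriv: "((\<lambda>t. (S - t) / j) has_real_derivative - 1 / j) (at t)" for t
    using j by (auto intro!: derivative_eq_intros)
  have "min (\<phi> 0) (\<phi> c) \<le> \<phi> t"
  proof (rule min_endpoints_le_if_concave_at_critical_points[of 0 c \<phi> \<phi>' \<phi>''])
    have "continuous_on {0..c} (\<lambda>t. (S - t) / j)" "(\<lambda>t. (S - t) / j) ` {0..c} \<subseteq> {0..}"
      using c j by (auto intro!: continuous_intros)
    then have "continuous_on {0..c} (\<lambda>t. power_cost a ((S - t) / j))"
      by (rule continuous_on_compose2[OF continuous_on_power_cost[OF a(1)]])
    moreover have "continuous_on {0..c} (power_cost a)"
      using continuous_on_power_cost[OF a(1)] by (rule continuous_on_subset) auto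
    ultimately show "continuous_on {0..c} \<phi>"
      unfolding \<phi>_def by (intro continuous_intros)
  next
    fix t assume "0 < t" "t < c"
    then have pos: "0 < t" "0 < (S - t) / j" using inner by (auto intro: less_trans)
    show "(\<phi> has_real_derivative \<phi>' t) (at t)"
      unfolding \<phi>_def \<phi>'_def using j
      by (auto intro!: derivative_eq_intros has_real_derivative_power_cost[OF pos(1)]
          DERIV_chain2[OF has_real_derivative_power_cost[OF pos(2)] inner_deriv])
    show "(\<phi>' has_real_derivative \<phi>'' t) (at t)"
      unfolding \<phi>'_def \<phi>''_def using j
      by (auto intro!: derivative_eq_intros has_real_derivative_power_cost'[OF pos(1)]
          DERIV_chain2[OF has_real_derivative_power_cost'[OF pos(2)] inner_deriv])
    show "\<phi>' t = 0 \<Longrightarrow> \<phi>'' t < 0"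
      unfolding \<phi>'_def \<phi>''_def
      using power_cost''_sum_neg_if_equal_slopes[OF a j pos(1) inner] \<open>0 < t\<close> \<open>t < c\<close> by simp
  qed (use t in \<open>simp_all add: c_def\<close>)
  moreover have "\<phi> 0 = j * power_cost a (S / j)" "\<phi> c = (j + 1) * power_cost a c"
    unfolding \<phi>_def c(3) using power_cost_zero[OF a(1)] by (simp_all add: algebra_simps)
  ultimately show ?thesis unfolding \<phi>_def c_def by simp
qed

text \<open>The smallest rate is at most the average \<open>sum x I / (j + 1)\<close>, so it can be traded against a
  uniform allocation of the others.\<close>

lemma uniform_power_cost_le_sum:
  assumes a: "0 < a" "a \<le> 1" and I: "finite I" "I \<noteq> {}" and x: "\<And>i. i \<in> I \<Longrightarrow> 0 \<le> x i"
  shows "\<exists>j::nat. 1 \<le> j \<and> j \<le> card I \<and>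
           j * power_cost a (sum x I / j) \<le> (\<Sum>i\<in>I. power_cost a (x i))"
proof -
  obtain m where "card I = Suc m" using I by (cases "card I") auto
  with I(1) x show ?thesis
  proof (induction m arbitrary: I)
    case 0
    then obtain i where "I = {i}" by (auto simp: card_Suc_eq)
    then show ?case by (intro exI[of _ 1]) simp
  next
    case (Suc m)
    have "I \<noteq> {}" using Suc.prems(3) by auto
    then obtain i0 where i0: "i0 \<in> I" and least: "\<And>i. i \<in> I \<Longrightarrow> x i0 \<le> x i"
      using arg_min_if_finite(1)[OF Suc.prems(1)] arg_min_least[OF Suc.prems(1)] by blast
    define I' where "I' = I - {i0}"
    obtain j :: nat where j: "1 \<le> j" "j \<le> card I'"
      and IH: "j * power_cost a (sum x I' / j) \<le> (\<Sum>i\<in>I'. power_cost a (x i))"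
      using Suc.IH[of I'] Suc.prems i0 unfolding I'_def by auto
    have sum_I: "sum f I = f i0 + sum f I'" for f :: "_ \<Rightarrow> real"
      unfolding I'_def using Suc.prems(1) i0 by (simp add: sum.remove)
    have card_I: "card I = Suc (card I')"
      unfolding I'_def using card_Suc_Diff1[OF Suc.prems(1) i0] by simp
    have x0: "0 \<le> x i0" using Suc.prems(2)[OF i0] .
    have "(real j + 1) * x i0 \<le> real (card I) * x i0"
      using j(2) card_I x0 by (intro mult_right_mono) auto
    also have "\<dots> \<le> sum x I"
      using sum_mono[of I "\<lambda>_. x i0" x] least by simp
    finally have "x i0 \<le> sum x I / (real j + 1)" by (simp add: field_simps)
    moreover have "1 \<le> real j" using j(1) by simp
    ultimately have "min (j * power_cost a (sum x I / j))
          ((real j + 1) * power_cost a (sum x I / (real j + 1)))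
        \<le> power_cost a (x i0) + j * power_cost a ((sum x I - x i0) / j)"
      using power_cost_split_ge_min[OF a _ x0] by blast
    also have "\<dots> \<le> (\<Sum>i\<in>I. power_cost a (x i))"
      using IH sum_I[of x] sum_I[of "\<lambda>i. power_cost a (x i)"] by simp
    finally consider "j * power_cost a (sum x I / j) \<le> (\<Sum>i\<in>I. power_cost a (x i))"
      | "(real j + 1) * power_cost a (sum x I / (real j + 1))
          \<le> (\<Sum>i\<in>I. power_cost a (x i))"
      unfolding min_le_iff_disj by blast
    then show ?case
    proof cases
      case 1
      then show ?thesis using j card_I by (intro exI[of _ j]) simp
    next
      case 2
      then show ?thesis using j card_I by (intro exI[of _ "Suc j"]) (simp add: add.commute)
    qed
  qed
qed

section \<open>Energy per bit\<close>

lemma strict_mono_on_mult_exp: "strict_mono_on {-1..} (\<lambda>w::real. w * exp w)"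
proof (rule strict_mono_onI)
  fix u v :: real
  assume "u \<in> {-1..}" "u < v"
  have "((\<lambda>w. w * exp w) has_real_derivative (1 + w) * exp w) (at w)" for w :: real
    by (auto intro!: derivative_eq_intros simp: algebra_simps)
  then obtain z where "u < z" "v * exp v - u * exp u = (v - u) * ((1 + z) * exp z)"
    using MVT2[OF \<open>u < v\<close>, of "\<lambda>w. w * exp w" "\<lambda>w. (1 + w) * exp w"] by blast
  moreover have "0 < (v - u) * ((1 + z) * exp z)"
    using \<open>u \<in> {-1..}\<close> \<open>u < v\<close> \<open>u < z\<close> by simp
  ultimately show "u * exp u < v * exp v" by simp
qed

lemma lambertW0_spec:
  assumes "- exp (-1) \<le> z"
  shows "-1 \<le> lambertW0 z" "lambertW0 z * exp (lambertW0 z) = z"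
proof -
  have "z \<le> max 0 z * exp (max 0 z)"
  proof (cases "0 \<le> z")
    case True
    then show ?thesis using mult_left_mono[of 1 "exp z" z] by simp
  qed simp
  then have "\<exists>w. -1 \<le> w \<and> w \<le> max 0 z \<and> w * exp w = z"
    using assms by (intro IVT'[of "\<lambda>w. w * exp w"]) (auto intro!: continuous_intros)
  then have "\<exists>!w. -1 \<le> w \<and> w * exp w = z"
    using strict_mono_on_imp_inj_on[OF strict_mono_on_mult_exp] unfolding inj_on_def by auto
  then have "-1 \<le> lambertW0 z \<and> lambertW0 z * exp (lambertW0 z) = z"
    unfolding lambertW0_def by (rule theI')
  then show "-1 \<le> lambertW0 z" "lambertW0 z * exp (lambertW0 z) = z" by auto
qed

text \<open>The paper's \<open>R\<^sub>a\<close>, the rate that minimises \<open>cost_per_rate a\<close>.\<close>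

definition efficient_rate :: "real \<Rightarrow> real" where
  "efficient_rate a = (lambertW0 (- (1 / a) * exp (- (1 / a))) + 1 / a) / ln 2"

text \<open>Numerator of the derivative of \<open>ln (cost_per_rate a)\<close>, in the variable \<open>\<tau> = x ln 2\<close>.\<close>

definition slope_num :: "real \<Rightarrow> real \<Rightarrow> real" where
  "slope_num a \<tau> = exp \<tau> * (a * \<tau> - 1) + 1"

lemma efficient_rate_root:
  assumes a: "0 < a" "a \<le> 1"
  shows "(1 - a) / a \<le> efficient_rate a * ln 2" "slope_num a (efficient_rate a * ln 2) = 0"
proof -
  define c where "c = 1 / a"
  define w where "w = lambertW0 (- c * exp (- c))"
  have "c \<le> exp (c - 1)" using exp_ge_add_one_self[of "c - 1"] by simp
  then have "c * exp (- c) \<le> exp (c - 1) * exp (- c)" by (simp add: mult_right_mono)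
  then have "- exp (-1) \<le> - c * exp (- c)" by (simp add: exp_add[symmetric])
  note w = lambertW0_spec[OF this, folded w_def]
  have rate: "efficient_rate a * ln 2 = w + c" unfolding efficient_rate_def w_def c_def by simp
  have "(1 - a) / a = c - 1" unfolding c_def using a by (simp add: field_simps)
  then show "(1 - a) / a \<le> efficient_rate a * ln 2"
    unfolding rate using w(1) by simp
  have "slope_num a (w + c) = a * exp c * (w * exp w) + 1"
    unfolding slope_num_def c_def using a by (simp add: exp_add algebra_simps)
  also have "\<dots> = 0" unfolding w(2) c_def using a by (simp add: exp_minus field_simps)
  finally show "slope_num a (efficient_rate a * ln 2) = 0" unfolding rate .
qed

lemma efficient_rate_nonneg:
  assumes "0 < a" "a \<le> 1"
  shows "0 \<le> efficient_rate a"
proof -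
  have "0 \<le> (1 - a) / a" using assms by simp
  then have "0 \<le> efficient_rate a * ln 2" using efficient_rate_root(1)[OF assms] by linarith
  then show ?thesis by (simp add: zero_le_mult_iff)
qed

lemma has_real_derivative_slope_num:
  "(slope_num a has_real_derivative exp \<tau> * (a * \<tau> - (1 - a))) (at \<tau>)"
  unfolding slope_num_def by (auto intro!: derivative_eq_intros simp: algebra_simps)

lemma slope_num_nonneg:
  assumes a: "0 < a" and root: "(1 - a) / a \<le> \<rho>" "slope_num a \<rho> = 0" and "\<rho> \<le> \<tau>"
  shows "0 \<le> slope_num a \<tau>"
proof -
  have "slope_num a \<rho> \<le> slope_num a \<tau>"
  proof (rule DERIV_nonneg_imp_nondecreasing[OF \<open>\<rho> \<le> \<tau>\<close>])
    fix s assume "\<rho> \<le> s"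
    then have "(1 - a) / a \<le> s" using root(1) by simp
    then have "0 \<le> a * s - (1 - a)" using a by (simp add: field_simps)
    then show "\<exists>d. (slope_num a has_real_derivative d) (at s) \<and> 0 \<le> d"
      by (intro exI[of _ "exp s * (a * s - (1 - a))"] conjI has_real_derivative_slope_num) simp
  qed
  then show ?thesis using root(2) by simp
qed

lemma slope_num_nonpos:
  assumes a: "0 < a" and root: "(1 - a) / a \<le> \<rho>" "slope_num a \<rho> = 0" and "0 \<le> \<tau>" "\<tau> \<le> \<rho>"
  shows "slope_num a \<tau> \<le> 0"
proof (cases "\<tau> \<le> (1 - a) / a")
  case True
  have "slope_num a \<tau> \<le> slope_num a 0"
  proof (rule DERIV_nonpos_imp_nonincreasing[OF \<open>0 \<le> \<tau>\<close>])
    fix s assume "s \<le> \<tau>"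
    then have "s \<le> (1 - a) / a" using True by simp
    then have "a * s - (1 - a) \<le> 0" using a by (simp add: field_simps)
    then show "\<exists>d. (slope_num a has_real_derivative d) (at s) \<and> d \<le> 0"
      by (intro exI[of _ "exp s * (a * s - (1 - a))"] conjI has_real_derivative_slope_num)
        (simp add: mult_nonneg_nonpos)
  qed
  then show ?thesis by (simp add: slope_num_def)
next
  case False
  have "slope_num a \<tau> \<le> slope_num a \<rho>"
  proof (rule DERIV_nonneg_imp_nondecreasing[OF \<open>\<tau> \<le> \<rho>\<close>])
    fix s assume "\<tau> \<le> s"
    then have "(1 - a) / a \<le> s" using False by simp
    then have "0 \<le> a * s - (1 - a)" using a by (simp add: field_simps)
    then show "\<exists>d. (slope_num a has_real_derivative d) (at s) \<and> 0 \<le> d"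
      by (intro exI[of _ "exp s * (a * s - (1 - a))"] conjI has_real_derivative_slope_num) simp
  qed
  then show ?thesis using root(2) by simp
qed

definition cost_per_rate :: "real \<Rightarrow> real \<Rightarrow> real" where
  "cost_per_rate a x = power_cost a x / x"

lemma cost_per_rate_eq_exp:
  "0 < x \<Longrightarrow> cost_per_rate a x = exp (a * ln (2 powr x - 1) - ln x)"
  using one_less_two_powr[of x] unfolding cost_per_rate_def power_cost_def
  by (simp add: powr_def exp_diff)

lemma has_real_derivative_ln_cost_per_rate:
  assumes "0 < x"
  shows "((\<lambda>x. a * ln (2 powr x - 1) - ln x)
           has_real_derivative slope_num a (x * ln 2) / (x * (2 powr x - 1))) (at x)"
  using assms one_less_two_powr[OF assms] unfolding slope_num_def
  by (auto intro!: derivative_eq_intros simp: powr_def field_simps)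

lemma cost_per_rate_mono:
  assumes a: "0 < a" "a \<le> 1" and x: "0 < x" "efficient_rate a \<le> x" and "x \<le> y"
  shows "cost_per_rate a x \<le> cost_per_rate a y"
proof -
  have "a * ln (2 powr x - 1) - ln x \<le> a * ln (2 powr y - 1) - ln y"
  proof (rule DERIV_nonneg_imp_nondecreasing[OF \<open>x \<le> y\<close>])
    fix z assume z: "x \<le> z"
    then have "efficient_rate a * ln 2 \<le> z * ln 2" using x by (simp add: mult_right_mono)
    then have "0 \<le> slope_num a (z * ln 2)"
      using slope_num_nonneg[OF a(1) efficient_rate_root[OF a]] by blast
    moreover have "0 < z * (2 powr z - 1)" using z x one_less_two_powr[of z] by simp
    ultimately show
      "\<exists>d. ((\<lambda>x. a * ln (2 powr x - 1) - ln x) has_real_derivative d) (at z) \<and> 0 \<le> d"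
      using has_real_derivative_ln_cost_per_rate[of z a] z x by (auto intro!: divide_nonneg_pos)
  qed
  then show ?thesis using x \<open>x \<le> y\<close> by (simp add: cost_per_rate_eq_exp)
qed

lemma cost_per_rate_antimono:
  assumes a: "0 < a" "a \<le> 1" and "0 < x" "x \<le> y" and y: "y \<le> efficient_rate a"
  shows "cost_per_rate a y \<le> cost_per_rate a x"
proof -
  have "a * ln (2 powr y - 1) - ln y \<le> a * ln (2 powr x - 1) - ln x"
  proof (rule DERIV_nonpos_imp_nonincreasing[OF \<open>x \<le> y\<close>])
    fix z assume z: "x \<le> z" "z \<le> y"
    then have "z * ln 2 \<le> efficient_rate a * ln 2" using y by (simp add: mult_right_mono)
    then have "slope_num a (z * ln 2) \<le> 0"
      using slope_num_nonpos[OF a(1) efficient_rate_root[OF a]] z \<open>0 < x\<close> by simp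
    moreover have "0 < z * (2 powr z - 1)" using z \<open>0 < x\<close> one_less_two_powr[of z] by simp
    ultimately show
      "\<exists>d. ((\<lambda>x. a * ln (2 powr x - 1) - ln x) has_real_derivative d) (at z) \<and> d \<le> 0"
      using has_real_derivative_ln_cost_per_rate[of z a] z \<open>0 < x\<close>
      by (auto intro!: divide_nonpos_pos)
  qed
  then show ?thesis using \<open>0 < x\<close> \<open>x \<le> y\<close> by (simp add: cost_per_rate_eq_exp)
qed

section \<open>Optimal allocations\<close>

lemma ceilfloor_minimal:
  fixes cost :: "nat \<Rightarrow> real"
  assumes y: "0 < y" "y \<le> real N"
    and dec: "\<And>j k. 1 \<le> j \<Longrightarrow> j \<le> k \<Longrightarrow> real k \<le> y \<Longrightarrow> cost k \<le> cost j"
    and inc: "\<And>j k. y \<le> real j \<Longrightarrow> j \<le> k \<Longrightarrow> k \<le> N \<Longrightarrow> cost j \<le> cost k"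
  shows "1 \<le> ceilfloor cost y" "ceilfloor cost y \<le> N"
    "\<And>j. 1 \<le> j \<Longrightarrow> j \<le> N \<Longrightarrow> cost (ceilfloor cost y) \<le> cost j"
proof -
  define fl where "fl = nat \<lfloor>y\<rfloor>"
  define ce where "ce = nat \<lceil>y\<rceil>"
  have fl: "real fl \<le> y" unfolding fl_def using y by simp
  have ce: "y \<le> real ce" "1 \<le> ce" "ce \<le> N" "ce \<le> fl + 1"
    unfolding ce_def fl_def using y by (auto simp: ceiling_le_iff le_nat_iff) linarith
  have cf: "ceilfloor cost y = (if 1 \<le> fl \<and> cost fl \<le> cost ce then fl else ce)"
    unfolding ceilfloor_def fl_def ce_def ..
  show "1 \<le> ceilfloor cost y" "ceilfloor cost y \<le> N"
    using cf ce fl y by auto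
  fix j assume j: "1 \<le> j" "j \<le> N"
  show "cost (ceilfloor cost y) \<le> cost j"
  proof (cases "j \<le> fl")
    case True
    then show ?thesis using cf dec[OF j(1) True fl] j(1) by auto
  next
    case False
    then show ?thesis using cf inc[OF ce(1) _ j(2)] ce(4) by auto
  qed
qed

lemma pcons_unif_alloc:
  assumes "0 < \<sigma>2" "0 \<le> R"
  shows "pcons N T 0 \<gamma> a (\<lambda>_. 0) k (unif_alloc N \<sigma>2 R k)
           = \<gamma> / N * \<sigma>2 powr a * (k * power_cost a (N * R / k))"
proof -
  have "unif_alloc N \<sigma>2 R k n powr a = \<sigma>2 powr a * power_cost a (N * R / k)" if "n < k" for n
    using that assms unfolding unif_alloc_def power_cost_def
    by (simp add: powr_mult ge_one_powr_ge_zero mult.commute)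
  then show ?thesis unfolding pcons_def by simp
qed

lemma feasible_unif_alloc:
  assumes "1 \<le> k" "k \<le> N" "0 < \<sigma>2" "0 \<le> R"
  shows "feasible N \<sigma>2 R k (unif_alloc N \<sigma>2 R k)"
proof -
  have "log 2 (1 + unif_alloc N \<sigma>2 R k n / \<sigma>2) = R * N / k" if "n < k" for n
    using that assms unfolding unif_alloc_def by simp
  then have "(\<Sum>n<k. log 2 (1 + unif_alloc N \<sigma>2 R k n / \<sigma>2)) = R * N"
    using assms by simp
  then show ?thesis
    using assms unfolding feasible_def unif_alloc_def by (auto simp: ge_one_powr_ge_zero)
qed

lemma uniform_pcons_le_pcons:
  assumes a: "0 < a" "a \<le> 1" and "0 < \<sigma>2" "0 \<le> \<gamma>" "0 < R"
    and feas: "feasible N \<sigma>2 R k p"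
  shows "\<exists>j. 1 \<le> j \<and> j \<le> k \<and>
           pcons N T 0 \<gamma> a (\<lambda>_. 0) j (unif_alloc N \<sigma>2 R j) \<le> pcons N T 0 \<gamma> a (\<lambda>_. 0) k p"
proof -
  define x where "x n = log 2 (1 + p n / \<sigma>2)" for n
  have p: "\<And>n. n < k \<Longrightarrow> 0 \<le> p n" and rate: "sum x {..<k} / N = R"
    using feas unfolding feasible_def x_def by auto
  have "N \<noteq> 0" using rate \<open>0 < R\<close> by (metis div_by_0 of_nat_0 less_irrefl)
  have "k \<noteq> 0" using rate \<open>0 < R\<close> by (metis div_0 lessThan_0 sum.empty less_irrefl)
  have sum_x: "sum x {..<k} = N * R" using rate \<open>N \<noteq> 0\<close> by (simp add: field_simps)
  have x: "0 \<le> x n" "p n powr a = \<sigma>2 powr a * power_cost a (x n)" if "n < k" for n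
    using p[OF that] \<open>0 < \<sigma>2\<close> unfolding x_def power_cost_def
    by (simp_all add: add_pos_nonneg powr_divide)
  obtain j where j: "1 \<le> j" "j \<le> k"
      and le: "j * power_cost a (sum x {..<k} / j) \<le> (\<Sum>n<k. power_cost a (x n))"
    using uniform_power_cost_le_sum[OF a, of "{..<k}" x] x(1) \<open>k \<noteq> 0\<close> by auto
  have "pcons N T 0 \<gamma> a (\<lambda>_. 0) j (unif_alloc N \<sigma>2 R j)
      \<le> \<gamma> / N * \<sigma>2 powr a * (\<Sum>n<k. power_cost a (x n))"
    unfolding pcons_unif_alloc[OF \<open>0 < \<sigma>2\<close> less_imp_le[OF \<open>0 < R\<close>]] sum_x[symmetric]
    using le assms by (intro mult_left_mono) auto
  also have "\<dots> = pcons N T 0 \<gamma> a (\<lambda>_. 0) k p"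
    unfolding pcons_def using x(2) by (simp add: sum_distrib_left mult.assoc)
  finally show ?thesis using j by blast
qed

lemma uniform_power_cost_unimodal:
  fixes j k :: nat
  assumes a: "0 < a" "a \<le> 1" and S: "0 < S"
    and y: "y = (if efficient_rate a = 0 then real N else min (S / efficient_rate a) (real N))"
  shows "1 \<le> j \<Longrightarrow> j \<le> k \<Longrightarrow> real k \<le> y \<Longrightarrow>
           k * power_cost a (S / k) \<le> j * power_cost a (S / j)"
    and "y \<le> real j \<Longrightarrow> j \<le> k \<Longrightarrow> k \<le> N \<Longrightarrow>
           j * power_cost a (S / j) \<le> k * power_cost a (S / k)"
proof -
  have uniform: "k * power_cost a (S / k) = S * cost_per_rate a (S / k)" if "1 \<le> k" for k :: nat
    using that S unfolding cost_per_rate_def by simp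
  have Ra: "0 \<le> efficient_rate a" using efficient_rate_nonneg[OF a] .
  show "k * power_cost a (S / k) \<le> j * power_cost a (S / j)"
    if j: "1 \<le> j" "j \<le> k" and k: "real k \<le> y"
  proof -
    have "efficient_rate a \<le> S / k"
    proof (cases "efficient_rate a = 0")
      case False
      then have "real k \<le> S / efficient_rate a" using k y by simp
      then show ?thesis using j Ra False by (simp add: le_divide_eq mult.commute)
    qed (use S j in simp)
    moreover have "S / k \<le> S / j" using j S by (simp add: frac_le)
    ultimately have "cost_per_rate a (S / k) \<le> cost_per_rate a (S / j)"
      using S j by (intro cost_per_rate_mono[OF a]) auto
    then show ?thesis using uniform j S by simp
  qed
  show "j * power_cost a (S / j) \<le> k * power_cost a (S / k)"
    if j: "y \<le> real j" "j \<le> k" and k: "k \<le> N"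
  proof (cases "j = k")
    case False
    then have "y < real N" using j k by simp
    then have "0 < efficient_rate a" "y = S / efficient_rate a"
      using y Ra by (auto split: if_splits)
    then have S_le: "S \<le> j * efficient_rate a" using j by (simp add: divide_le_eq)
    then have "1 \<le> j" using S by (cases j) auto
    moreover have "S / j \<le> efficient_rate a" using S_le \<open>1 \<le> j\<close> by (simp add: divide_le_eq mult.commute)
    moreover have "S / k \<le> S / j" using j S \<open>1 \<le> j\<close> by (simp add: frac_le)
    ultimately have "cost_per_rate a (S / j) \<le> cost_per_rate a (S / k)"
      using S j by (intro cost_per_rate_antimono[OF a]) auto
    then show ?thesis using uniform j \<open>1 \<le> j\<close> S by simp
  qed simp
qed

theorem lemma1:
  fixes N :: nat and T \<sigma>2 \<gamma> \<alpha> R :: real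
  assumes "N \<ge> 1" and "T > 0" and "\<sigma>2 > 0" and "\<gamma> > 0"
    and "0 < \<alpha>" and "\<alpha> \<le> 1" and "R > 0"
  shows
   "let Ra = (lambertW0 (- (1 / \<alpha>) * exp (- (1 / \<alpha>))) + 1 / \<alpha>) / ln 2;
        y = (if Ra = 0 then real N else min (real N * R / Ra) (real N));
        cost = (\<lambda>k. pcons N T 0 \<gamma> \<alpha> (\<lambda>_. 0) k (unif_alloc N \<sigma>2 R k));
        Na = ceilfloor cost y
    in feasible N \<sigma>2 R Na (unif_alloc N \<sigma>2 R Na) \<and>
       (\<forall>Na' p. feasible N \<sigma>2 R Na' p \<longrightarrow>
          pcons N T 0 \<gamma> \<alpha> (\<lambda>_. 0) Na (unif_alloc N \<sigma>2 R Na)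
            \<le> pcons N T 0 \<gamma> \<alpha> (\<lambda>_. 0) Na' p)"
proof -
  note a = \<open>0 < \<alpha>\<close> \<open>\<alpha> \<le> 1\<close>
  define y where "y = (if efficient_rate \<alpha> = 0 then real N
                       else min (real N * R / efficient_rate \<alpha>) (real N))"
  define cost where "cost k = pcons N T 0 \<gamma> \<alpha> (\<lambda>_. 0) k (unif_alloc N \<sigma>2 R k)" for k
  define Na where "Na = ceilfloor cost y"
  have NR: "0 < real N * R" using assms by simp
  have cost_eq: "cost k = \<gamma> / N * \<sigma>2 powr \<alpha> * (k * power_cost \<alpha> (N * R / k))" for k
    unfolding cost_def using pcons_unif_alloc assms by simp
  have "0 \<le> \<gamma> / N * \<sigma>2 powr \<alpha>" using assms by simp
  note unimodal = uniform_power_cost_unimodal[OF a NR y_def, THEN mult_left_mono[OF _ this]]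
  have "0 < y" "y \<le> real N"
    unfolding y_def using NR efficient_rate_nonneg[OF a] assms by auto
  from ceilfloor_minimal[OF this, of cost, folded Na_def]
  have Na: "1 \<le> Na" "Na \<le> N" "\<And>j. 1 \<le> j \<Longrightarrow> j \<le> N \<Longrightarrow> cost Na \<le> cost j"
    unfolding cost_eq using unimodal by blast+
  have "cost Na \<le> pcons N T 0 \<gamma> \<alpha> (\<lambda>_. 0) Na' p" if feas: "feasible N \<sigma>2 R Na' p" for Na' p
  proof -
    obtain j where "1 \<le> j" "j \<le> Na'" "cost j \<le> pcons N T 0 \<gamma> \<alpha> (\<lambda>_. 0) Na' p"
      using uniform_pcons_le_pcons[OF a \<open>0 < \<sigma>2\<close> less_imp_le[OF \<open>0 < \<gamma>\<close>] \<open>0 < R\<close> feas]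
      unfolding cost_def by blast
    moreover have "Na' \<le> N" using feas unfolding feasible_def by simp
    ultimately show ?thesis using Na(3)[of j] by simp
  qed
  moreover have "feasible N \<sigma>2 R Na (unif_alloc N \<sigma>2 R Na)"
    using feasible_unif_alloc[OF Na(1,2)] assms by simp
  ultimately show ?thesis
    unfolding Let_def efficient_rate_def[symmetric] cost_def[abs_def, symmetric] y_def[symmetric]
      Na_def[symmetric] by (simp add: cost_def)
qed

end
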